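(* Let $F$ be a field of characteristic different from $2$, let $a_1,a_2\in F^\times$ be such that $E=F(\sqrt{a_1},\sqrt{a_2})$ is Galois over $F$ with Galois group isomorphic to $\mathbb Z/2\mathbb Z\times\mathbb Z/2\mathbb Z$, and let $E_1=F(\sqrt{a_1})$, $E_2=F(\sqrt{a_2})$, $E_3=F(\sqrt{a_1a_2})$. Then \[N_{E/E_3}(E^\times)\cap F^\times=N_{E_1/F}(E_1^\times)\cdot N_{E_2/F}(E_2^\times).\]
   Context: For a quadratic extension $L/K$ with nontrivial automorphism $\tau$, $N_{L/K}(x)=x\,\tau(x)$ for $x\in L^\times$. For subsets $A,B$ of a multiplicative group, $A\cdot B=\{ab:a\in A,b\in B\}$. *)

theory Defs
  imports Main
begin

definition is_subfield :: "'a::field set \<Rightarrow> bool" where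
  "is_subfield K \<longleftrightarrow> 0 \<in> K \<and> 1 \<in> K \<and>
     (\<forall>x\<in>K. \<forall>y\<in>K. x + y \<in> K \<and> x * y \<in> K) \<and>
     (\<forall>x\<in>K. - x \<in> K \<and> inverse x \<in> K)"

definition gen_field :: "'a::field set \<Rightarrow> 'a set \<Rightarrow> 'a set" where
  "gen_field K S = \<Inter> {L. is_subfield L \<and> K \<union> S \<subseteq> L}"

definition auts :: "'a::field set \<Rightarrow> 'a set \<Rightarrow> ('a \<Rightarrow> 'a) set" where
  "auts L K = {\<sigma>. bij_betw \<sigma> L L \<and>
      (\<forall>x\<in>L. \<forall>y\<in>L. \<sigma> (x + y) = \<sigma> x + \<sigma> y \<and> \<sigma> (x * y) = \<sigma> x * \<sigma> y) \<and>
      \<sigma> 1 = 1 \<and> (\<forall>x\<in>K. \<sigma> x = x) \<and> (\<forall>x. x \<notin> L \<longrightarrow> \<sigma> x = x)}"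

definition fixed_field :: "'a::field set \<Rightarrow> ('a \<Rightarrow> 'a) set \<Rightarrow> 'a set" where
  "fixed_field L G = {x\<in>L. \<forall>\<sigma>\<in>G. \<sigma> x = x}"

text \<open>L/K is Galois with Galois group isomorphic to Z/2 x Z/2 (modelled as bool x bool with xor).\<close>
definition galois_V4 :: "'a::field set \<Rightarrow> 'a set \<Rightarrow> bool" where
  "galois_V4 L K \<longleftrightarrow> fixed_field L (auts L K) = K \<and>
     (\<exists>\<phi>. bij_betw \<phi> (auts L K) (UNIV :: (bool \<times> bool) set) \<and>
        (\<forall>\<sigma>\<in>auts L K. \<forall>\<tau>\<in>auts L K.
           \<phi> (\<sigma> \<circ> \<tau>) = (fst (\<phi> \<sigma>) \<noteq> fst (\<phi> \<tau>), snd (\<phi> \<sigma>) \<noteq> snd (\<phi> \<tau>))))"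

definition quad_norm :: "'a::field set \<Rightarrow> 'a set \<Rightarrow> 'a \<Rightarrow> 'a" where
  "quad_norm L K x = x * (THE \<tau>. \<tau> \<in> auts L K \<and> \<tau> \<noteq> id) x"

definition setmul :: "'a::times set \<Rightarrow> 'a set \<Rightarrow> 'a set" where
  "setmul A B = {a * b | a b. a \<in> A \<and> b \<in> B}"

end

theory Submission
  imports Defs
begin

text \<open>Let \<open>\<sigma>1\<close>, \<open>\<sigma>2\<close>, \<open>\<tau>\<close> be the automorphisms of \<open>E = F(\<alpha>, \<beta>)\<close> changing the sign of
  \<open>\<alpha>\<close>, of \<open>\<beta>\<close>, and of both. Then \<open>E1\<close>, \<open>E2\<close>, \<open>E3\<close> are their fixed fields and the three
  norms are \<open>x \<sigma>1(x)\<close>, \<open>x \<sigma>2(x)\<close>, \<open>x \<tau>(x)\<close>. As \<open>\<tau>\<close> agrees with \<open>\<sigma>1\<close> on \<open>E1\<close> and with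
  \<open>\<sigma>2\<close> on \<open>E2\<close>, \<open>N(v1) N(v2) = N(v1 v2)\<close>. Conversely, write \<open>u = p + q \<alpha>\<close> with
  \<open>p, q \<in> E2\<close> and let \<open>p' = \<sigma>2 p\<close>, \<open>q' = \<sigma>2 q\<close>. Invariance of \<open>c = u \<tau>(u)\<close> under \<open>\<sigma>1\<close>
  gives \<open>q p' = p q'\<close>, hence \<open>c = p p' - \<alpha>\<^sup>2 q q'\<close>. If \<open>p = 0\<close> then \<open>c = N(\<alpha>) N(q)\<close>;
  otherwise \<open>s = p p'\<close> and \<open>r = q p'\<close> lie in \<open>F\<close> and \<open>c s = s\<^sup>2 - \<alpha>\<^sup>2 r\<^sup>2 = N(s + r \<alpha>)\<close>,
  so \<open>c = N(s + r \<alpha>) N(1 / p)\<close>.\<close>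

lemma subfield_zero: "is_subfield L \<Longrightarrow> 0 \<in> L"
  and subfield_one: "is_subfield L \<Longrightarrow> 1 \<in> L"
  and subfield_add: "is_subfield L \<Longrightarrow> x \<in> L \<Longrightarrow> y \<in> L \<Longrightarrow> x + y \<in> L"
  and subfield_mult: "is_subfield L \<Longrightarrow> x \<in> L \<Longrightarrow> y \<in> L \<Longrightarrow> x * y \<in> L"
  and subfield_uminus: "is_subfield L \<Longrightarrow> x \<in> L \<Longrightarrow> - x \<in> L"
  and subfield_inverse: "is_subfield L \<Longrightarrow> x \<in> L \<Longrightarrow> inverse x \<in> L"
  by (simp_all add: is_subfield_def)

lemma subfield_diff: "is_subfield L \<Longrightarrow> x \<in> L \<Longrightarrow> y \<in> L \<Longrightarrow> x - y \<in> L"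
  using subfield_add subfield_uminus by (metis diff_conv_add_uminus)

lemma subfield_divide: "is_subfield L \<Longrightarrow> x \<in> L \<Longrightarrow> y \<in> L \<Longrightarrow> x / y \<in> L"
  using subfield_mult subfield_inverse by (metis divide_inverse)

lemma subfield_two: "is_subfield L \<Longrightarrow> 2 \<in> L"
  using subfield_add subfield_one by (metis one_add_one)

lemmas subfield_closed =
  subfield_zero subfield_one subfield_two subfield_add subfield_mult subfield_uminus
  subfield_inverse subfield_diff subfield_divide

lemma is_subfield_gen_field: "is_subfield (gen_field K S)"
  unfolding gen_field_def is_subfield_def by auto

lemma gen_field_superset: "K \<union> S \<subseteq> gen_field K S"
  unfolding gen_field_def by auto

lemma gen_field_least: "is_subfield L \<Longrightarrow> K \<subseteq> L \<Longrightarrow> S \<subseteq> L \<Longrightarrow> gen_field K S \<subseteq> L"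
  unfolding gen_field_def by auto

lemma id_in_auts: "id \<in> auts L K"
  by (simp add: auts_def)

lemma auts_in: "\<sigma> \<in> auts L K \<Longrightarrow> x \<in> L \<Longrightarrow> \<sigma> x \<in> L"
  and auts_fixes: "\<sigma> \<in> auts L K \<Longrightarrow> x \<in> K \<Longrightarrow> \<sigma> x = x"
  and auts_outside: "\<sigma> \<in> auts L K \<Longrightarrow> x \<notin> L \<Longrightarrow> \<sigma> x = x"
  and auts_add: "\<sigma> \<in> auts L K \<Longrightarrow> x \<in> L \<Longrightarrow> y \<in> L \<Longrightarrow> \<sigma> (x + y) = \<sigma> x + \<sigma> y"
  and auts_mult: "\<sigma> \<in> auts L K \<Longrightarrow> x \<in> L \<Longrightarrow> y \<in> L \<Longrightarrow> \<sigma> (x * y) = \<sigma> x * \<sigma> y"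
  and auts_one: "\<sigma> \<in> auts L K \<Longrightarrow> \<sigma> 1 = 1"
  unfolding auts_def by (auto dest: bij_betw_apply)

lemma auts_zero:
  assumes "\<sigma> \<in> auts L K" shows "\<sigma> 0 = 0"
proof (cases "0 \<in> L")
  case True
  then have "\<sigma> (0 + 0) = \<sigma> 0 + \<sigma> 0" using assms auts_add by blast
  then show ?thesis by (metis add.right_neutral add_left_cancel)
qed (use assms auts_outside in blast)

lemma auts_uminus:
  assumes "\<sigma> \<in> auts L K" "is_subfield L" "x \<in> L" shows "\<sigma> (- x) = - \<sigma> x"
proof -
  have "\<sigma> x + \<sigma> (- x) = 0"
    using auts_add[OF assms(1) assms(3) subfield_uminus[OF assms(2,3)]] auts_zero[OF assms(1)] by simp
  then show ?thesis by (simp add: eq_neg_iff_add_eq_0 add.commute)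
qed

lemma auts_diff:
  "\<sigma> \<in> auts L K \<Longrightarrow> is_subfield L \<Longrightarrow> x \<in> L \<Longrightarrow> y \<in> L \<Longrightarrow> \<sigma> (x - y) = \<sigma> x - \<sigma> y"
  using auts_add[of \<sigma> L K x "- y"] auts_uminus[of \<sigma> L K y] subfield_uminus[of L y] by simp

lemma auts_inverse:
  assumes "\<sigma> \<in> auts L K" "is_subfield L" "x \<in> L" shows "\<sigma> (inverse x) = inverse (\<sigma> x)"
proof (cases "x = 0")
  case True
  then show ?thesis using auts_zero[OF assms(1)] by simp
next
  case False
  then have "\<sigma> x * \<sigma> (inverse x) = 1"
    using auts_mult[OF assms(1,3) subfield_inverse[OF assms(2,3)]] auts_one[OF assms(1)] by simp
  then show ?thesis by (metis inverse_unique)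
qed

lemma auts_divide:
  "\<sigma> \<in> auts L K \<Longrightarrow> is_subfield L \<Longrightarrow> x \<in> L \<Longrightarrow> y \<in> L \<Longrightarrow> \<sigma> (x / y) = \<sigma> x / \<sigma> y"
  using auts_mult[of \<sigma> L K x "inverse y"] auts_inverse[of \<sigma> L K y] subfield_inverse[of L y]
  by (simp add: divide_inverse)

lemma auts_power2: "\<sigma> \<in> auts L K \<Longrightarrow> x \<in> L \<Longrightarrow> \<sigma> (x ^ 2) = (\<sigma> x) ^ 2"
  by (simp add: power2_eq_square auts_mult)

lemma auts_eq_0_iff:
  assumes "\<sigma> \<in> auts L K" "is_subfield L" "x \<in> L" shows "\<sigma> x = 0 \<longleftrightarrow> x = 0"
proof
  assume "\<sigma> x = 0"
  then have "\<sigma> (x * inverse x) = 0"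
    using auts_mult[OF assms(1,3) subfield_inverse[OF assms(2,3)]] by simp
  then show "x = 0" using auts_one[OF assms(1)] by (cases "x = 0") auto
qed (simp add: auts_zero[OF assms(1)])

lemma auts_comp:
  assumes "\<sigma> \<in> auts L K" "\<sigma>' \<in> auts L K" shows "\<sigma> \<circ> \<sigma>' \<in> auts L K"
proof -
  have "bij_betw (\<sigma> \<circ> \<sigma>') L L"
    using assms bij_betw_trans unfolding auts_def by blast
  moreover have "\<forall>x\<in>L. \<forall>y\<in>L. (\<sigma> \<circ> \<sigma>') (x + y) = (\<sigma> \<circ> \<sigma>') x + (\<sigma> \<circ> \<sigma>') y \<and>
      (\<sigma> \<circ> \<sigma>') (x * y) = (\<sigma> \<circ> \<sigma>') x * (\<sigma> \<circ> \<sigma>') y"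
    using assms by (simp add: auts_add auts_mult auts_in)
  ultimately show ?thesis
    using assms auts_one auts_fixes auts_outside unfolding auts_def by auto
qed

lemma auts_change_base: "\<sigma> \<in> auts L K \<Longrightarrow> \<forall>x\<in>K'. \<sigma> x = x \<Longrightarrow> \<sigma> \<in> auts L K'"
  unfolding auts_def by blast

lemma auts_restrict:
  assumes "\<sigma> \<in> auts L K" "is_subfield M" "M \<subseteq> L" "\<forall>x\<in>M. \<sigma> x \<in> M" "\<forall>x\<in>M. \<sigma> (\<sigma> x) = x"
  shows "(\<lambda>x. if x \<in> M then \<sigma> x else x) \<in> auts M K"
proof -
  let ?\<rho> = "\<lambda>x. if x \<in> M then \<sigma> x else x"
  have "bij_betw ?\<rho> M M"
    by (rule bij_betw_byWitness[where f' = ?\<rho>]) (use assms(4,5) in auto)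
  then show ?thesis
    using assms subfield_closed[OF assms(2)] auts_fixes[OF assms(1)] auts_outside[OF assms(1)]
    unfolding auts_def by (auto simp: subsetD)
qed

lemma is_subfield_equalizer:
  assumes "is_subfield L" "\<sigma> \<in> auts L K" "\<sigma>' \<in> auts L K'"
  shows "is_subfield {x\<in>L. \<sigma> x = \<sigma>' x}"
  using subfield_closed[OF assms(1)] auts_zero[OF assms(2)] auts_zero[OF assms(3)]
    auts_one[OF assms(2)] auts_one[OF assms(3)] auts_add[OF assms(2)] auts_add[OF assms(3)]
    auts_mult[OF assms(2)] auts_mult[OF assms(3)] auts_uminus[OF assms(2,1)] auts_uminus[OF assms(3,1)]
    auts_inverse[OF assms(2,1)] auts_inverse[OF assms(3,1)]
  unfolding is_subfield_def by simp

lemma is_subfield_preimage: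
  assumes "is_subfield L" "\<sigma> \<in> auts L K" "is_subfield M"
  shows "is_subfield {x\<in>L. \<sigma> x \<in> M}"
  using subfield_closed[OF assms(1)] subfield_closed[OF assms(3)] auts_zero[OF assms(2)]
    auts_one[OF assms(2)] auts_add[OF assms(2)] auts_mult[OF assms(2)]
    auts_uminus[OF assms(2,1)] auts_inverse[OF assms(2,1)]
  unfolding is_subfield_def by simp

lemma gen_field_auts_agree:
  assumes "is_subfield L" "\<sigma> \<in> auts L K" "\<sigma>' \<in> auts L K'" "gen_field K0 S \<subseteq> L"
    "\<forall>x\<in>K0 \<union> S. \<sigma> x = \<sigma>' x" "x \<in> gen_field K0 S"
  shows "\<sigma> x = \<sigma>' x"
proof -
  have "gen_field K0 S \<subseteq> {x\<in>L. \<sigma> x = \<sigma>' x}"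
  proof (rule gen_field_least[OF is_subfield_equalizer[OF assms(1-3)]])
    show "K0 \<subseteq> {x\<in>L. \<sigma> x = \<sigma>' x}" "S \<subseteq> {x\<in>L. \<sigma> x = \<sigma>' x}"
      using gen_field_superset[of K0 S] assms(4,5) by auto
  qed
  then show ?thesis using assms(6) by blast
qed

lemma gen_field_auts_image:
  assumes "is_subfield L" "\<sigma> \<in> auts L K" "gen_field K0 S \<subseteq> L"
    "\<sigma> ` (K0 \<union> S) \<subseteq> gen_field K0 S" "x \<in> gen_field K0 S"
  shows "\<sigma> x \<in> gen_field K0 S"
proof -
  have "gen_field K0 S \<subseteq> {x\<in>L. \<sigma> x \<in> gen_field K0 S}"
  proof (rule gen_field_least[OF is_subfield_preimage[OF assms(1,2) is_subfield_gen_field]])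
    show "K0 \<subseteq> {x\<in>L. \<sigma> x \<in> gen_field K0 S}" "S \<subseteq> {x\<in>L. \<sigma> x \<in> gen_field K0 S}"
      using gen_field_superset[of K0 S] assms(3,4) by auto
  qed
  then show ?thesis using assms(5) by blast
qed

lemma auts_gen_field_eqI:
  assumes "\<sigma> \<in> auts (gen_field K S) K'" "\<sigma>' \<in> auts (gen_field K S) K''"
    "\<forall>x\<in>K \<union> S. \<sigma> x = \<sigma>' x"
  shows "\<sigma> = \<sigma>'"
proof
  fix x
  show "\<sigma> x = \<sigma>' x"
    using gen_field_auts_agree[OF is_subfield_gen_field assms(1,2) order_refl assms(3)]
      auts_outside[OF assms(1)] auts_outside[OF assms(2)]
    by (cases "x \<in> gen_field K S") auto
qed

lemma quad_norm_eq:
  fixes \<gamma> :: "'a::field"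
  assumes L: "L = gen_field K {\<gamma>}" and "(2::'a) \<noteq> 0" "\<gamma> \<noteq> 0" "\<gamma>\<^sup>2 \<in> K"
    and \<rho>: "\<rho> \<in> auts L K" "\<rho> \<gamma> = - \<gamma>"
  shows "quad_norm L K x = x * \<rho> x"
proof -
  have \<gamma>: "\<gamma> \<in> L" using L gen_field_superset by blast
  have "(THE \<rho>'. \<rho>' \<in> auts L K \<and> \<rho>' \<noteq> id) = \<rho>"
  proof (rule the_equality)
    have "\<gamma> + \<gamma> \<noteq> 0" using assms(2,3) by (simp flip: mult_2)
    then have "\<gamma> \<noteq> - \<gamma>" by (simp add: eq_neg_iff_add_eq_0)
    then show "\<rho> \<in> auts L K \<and> \<rho> \<noteq> id" using \<rho> by auto
  next
    fix \<rho>' assume \<rho>': "\<rho>' \<in> auts L K \<and> \<rho>' \<noteq> id"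
    have "(\<rho>' \<gamma>)\<^sup>2 = \<gamma>\<^sup>2"
      using \<rho>' auts_power2[of \<rho>' L K \<gamma>] auts_fixes[of \<rho>' L K "\<gamma>\<^sup>2"] \<gamma> assms(4) by simp
    then have "\<rho>' \<gamma> = \<gamma> \<or> \<rho>' \<gamma> = - \<gamma>" by (simp add: power2_eq_iff)
    moreover have "\<rho>' \<gamma> \<noteq> \<gamma>"
      using \<rho>' auts_gen_field_eqI[of \<rho>' K "{\<gamma>}" K id K] auts_fixes[of \<rho>' L K] id_in_auts L
      by auto
    ultimately have "\<rho>' \<gamma> = \<rho> \<gamma>" using \<rho> by simp
    then show "\<rho>' = \<rho>"
      using \<rho>' \<rho> L by (intro auts_gen_field_eqI[of \<rho>' K "{\<gamma>}" K \<rho> K]) (auto simp: auts_fixes)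
  qed
  then show ?thesis by (simp add: quad_norm_def)
qed

lemma setmul_iff: "c \<in> setmul A B \<longleftrightarrow> (\<exists>a\<in>A. \<exists>b\<in>B. c = a * b)"
  unfolding setmul_def by blast

lemma setmul_imageI: "a \<in> A \<Longrightarrow> b \<in> B \<Longrightarrow> f a * g b \<in> setmul (f ` A) (g ` B)"
  unfolding setmul_def by blast

locale biquadratic =
  fixes F :: "'a::field set" and \<alpha> \<beta> :: 'a
  assumes subfield_F: "is_subfield F"
    and two_nonzero: "(2::'a) \<noteq> 0"
    and alpha_square: "\<alpha>\<^sup>2 \<in> F" and alpha_nonzero: "\<alpha> \<noteq> 0"
    and beta_square: "\<beta>\<^sup>2 \<in> F" and beta_nonzero: "\<beta> \<noteq> 0"
    and galois: "galois_V4 (gen_field F {\<alpha>, \<beta>}) F"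
begin

abbreviation "E \<equiv> gen_field F {\<alpha>, \<beta>}"
abbreviation "E1 \<equiv> gen_field F {\<alpha>}"
abbreviation "E2 \<equiv> gen_field F {\<beta>}"
abbreviation "E3 \<equiv> gen_field F {\<alpha> * \<beta>}"

lemma subfields [simp]:
  "is_subfield F" "is_subfield E" "is_subfield E1" "is_subfield E2" "is_subfield E3"
  by (simp_all add: subfield_F is_subfield_gen_field)

lemma generators [simp]: "\<alpha> \<in> E" "\<beta> \<in> E" "\<alpha> \<in> E1" "\<beta> \<in> E2"
  using gen_field_superset by blast+

lemma subset_E: "F \<subseteq> E" "E1 \<subseteq> E" "E2 \<subseteq> E" "E3 \<subseteq> E"
proof -
  show F: "F \<subseteq> E" using gen_field_superset by blast
  have "\<alpha> * \<beta> \<in> E" by (simp add: subfield_mult)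
  then show "E1 \<subseteq> E" "E2 \<subseteq> E" "E3 \<subseteq> E"
    using F by (simp_all add: gen_field_least)
qed

lemma mem_subfields [simp]:
  "x \<in> F \<Longrightarrow> x \<in> E1" "x \<in> F \<Longrightarrow> x \<in> E2" "x \<in> F \<Longrightarrow> x \<in> E3"
  "x \<in> E1 \<Longrightarrow> x \<in> E" "x \<in> E2 \<Longrightarrow> x \<in> E" "x \<in> E3 \<Longrightarrow> x \<in> E"
  using gen_field_superset subset_E by blast+

declare subfield_closed [simp]

lemma neg_neq_self: "x \<noteq> 0 \<Longrightarrow> - x \<noteq> (x::'a)"
  using two_nonzero by (simp add: eq_neg_iff_add_eq_0 flip: mult_2)

lemma card_auts: "card (auts E F) = 4"
proof -
  obtain \<phi> where "bij_betw \<phi> (auts E F) (UNIV :: (bool \<times> bool) set)"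
    using galois unfolding galois_V4_def by blast
  then show ?thesis
    by (simp add: bij_betw_same_card card_UNIV_bool card_cartesian_product flip: UNIV_Times_UNIV)
qed

lemma auts_signs:
  assumes "\<sigma> \<in> auts E F" shows "\<sigma> \<alpha> \<in> {\<alpha>, - \<alpha>} \<and> \<sigma> \<beta> \<in> {\<beta>, - \<beta>}"
proof -
  have "(\<sigma> \<alpha>)\<^sup>2 = \<alpha>\<^sup>2" "(\<sigma> \<beta>)\<^sup>2 = \<beta>\<^sup>2"
    using assms alpha_square beta_square by (simp_all flip: auts_power2 add: auts_fixes)
  then show ?thesis by (simp add: power2_eq_iff)
qed

lemma auts_eqI: "\<sigma> \<in> auts E F \<Longrightarrow> \<sigma>' \<in> auts E F \<Longrightarrow> \<sigma> \<alpha> = \<sigma>' \<alpha> \<Longrightarrow> \<sigma> \<beta> = \<sigma>' \<beta> \<Longrightarrow> \<sigma> = \<sigma>'"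
  by (rule auts_gen_field_eqI) (auto simp: auts_fixes)

text \<open>The Klein four hypothesis enters only through \<open>card (auts E F) = 4\<close>, which forces all
  four sign patterns to occur.\<close>
lemma signs_of_auts: "(\<lambda>\<sigma>. (\<sigma> \<alpha>, \<sigma> \<beta>)) ` auts E F = {\<alpha>, - \<alpha>} \<times> {\<beta>, - \<beta>}"
proof (rule card_subset_eq)
  have "inj_on (\<lambda>\<sigma>. (\<sigma> \<alpha>, \<sigma> \<beta>)) (auts E F)"
    by (auto intro: inj_onI auts_eqI)
  then show "card ((\<lambda>\<sigma>. (\<sigma> \<alpha>, \<sigma> \<beta>)) ` auts E F) = card ({\<alpha>, - \<alpha>} \<times> {\<beta>, - \<beta>})"
    using card_auts alpha_nonzero beta_nonzero neg_neq_self
    by (simp add: card_image card_cartesian_product)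
qed (use auts_signs in auto)

definition sign_aut :: "'a \<Rightarrow> 'a \<Rightarrow> 'a \<Rightarrow> 'a" where
  "sign_aut s t = (THE \<sigma>. \<sigma> \<in> auts E F \<and> \<sigma> \<alpha> = s \<and> \<sigma> \<beta> = t)"

lemma sign_aut:
  assumes "s \<in> {\<alpha>, - \<alpha>}" "t \<in> {\<beta>, - \<beta>}"
  shows "sign_aut s t \<in> auts E F \<and> sign_aut s t \<alpha> = s \<and> sign_aut s t \<beta> = t"
proof -
  have "(s, t) \<in> (\<lambda>\<sigma>. (\<sigma> \<alpha>, \<sigma> \<beta>)) ` auts E F"
    using assms by (simp only: signs_of_auts SigmaI)
  then obtain \<sigma> where \<sigma>: "\<sigma> \<in> auts E F" "\<sigma> \<alpha> = s" "\<sigma> \<beta> = t" by auto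
  have "sign_aut s t = \<sigma>" unfolding sign_aut_def
  proof (rule the_equality)
    fix \<sigma>' assume "\<sigma>' \<in> auts E F \<and> \<sigma>' \<alpha> = s \<and> \<sigma>' \<beta> = t"
    then show "\<sigma>' = \<sigma>" using \<sigma> by (intro auts_eqI) auto
  qed (use \<sigma> in blast)
  then show ?thesis using \<sigma> by simp
qed

lemma sign_aut_auts [simp]: "s \<in> {\<alpha>, - \<alpha>} \<Longrightarrow> t \<in> {\<beta>, - \<beta>} \<Longrightarrow> sign_aut s t \<in> auts E F"
  and sign_aut_alpha [simp]: "s \<in> {\<alpha>, - \<alpha>} \<Longrightarrow> t \<in> {\<beta>, - \<beta>} \<Longrightarrow> sign_aut s t \<alpha> = s"
  and sign_aut_beta [simp]: "s \<in> {\<alpha>, - \<alpha>} \<Longrightarrow> t \<in> {\<beta>, - \<beta>} \<Longrightarrow> sign_aut s t \<beta> = t"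
  using sign_aut by blast+

lemmas sign_aut_simps [simp] =
  auts_in [OF sign_aut_auts] auts_fixes [OF sign_aut_auts] auts_add [OF sign_aut_auts]
  auts_mult [OF sign_aut_auts] auts_uminus [OF sign_aut_auts] auts_diff [OF sign_aut_auts]
  auts_inverse [OF sign_aut_auts] auts_divide [OF sign_aut_auts] auts_eq_0_iff [OF sign_aut_auts]

abbreviation "\<sigma>1 \<equiv> sign_aut (- \<alpha>) \<beta>"
abbreviation "\<sigma>2 \<equiv> sign_aut \<alpha> (- \<beta>)"
abbreviation "\<tau> \<equiv> sign_aut (- \<alpha>) (- \<beta>)"

lemma sign_aut_of: "\<sigma> \<in> auts E F \<Longrightarrow> sign_aut (\<sigma> \<alpha>) (\<sigma> \<beta>) = \<sigma>"
  using auts_signs[of \<sigma>] by (intro auts_eqI sign_aut_auts) auto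

lemma sign_aut_id: "sign_aut \<alpha> \<beta> = id"
  using sign_aut_of[OF id_in_auts] by simp

lemma sign_aut_comp:
  assumes "s \<in> {\<alpha>, - \<alpha>}" "t \<in> {\<beta>, - \<beta>}" "s' \<in> {\<alpha>, - \<alpha>}" "t' \<in> {\<beta>, - \<beta>}"
  shows "sign_aut s t (sign_aut s' t' x) = sign_aut (sign_aut s t s') (sign_aut s t t') x"
proof -
  let ?\<sigma> = "sign_aut s t \<circ> sign_aut s' t'"
  have "?\<sigma> \<in> auts E F" using assms by (intro auts_comp sign_aut_auts)
  from fun_cong[OF sign_aut_of[OF this], of x] show ?thesis
    using assms by (simp only: comp_apply sign_aut_alpha sign_aut_beta)
qed

lemma sigma1_sigma1 [simp]: "\<sigma>1 (\<sigma>1 x) = x"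
  and sigma2_sigma2 [simp]: "\<sigma>2 (\<sigma>2 x) = x"
  and sigma1_sigma2 [simp]: "\<sigma>1 (\<sigma>2 x) = \<sigma>2 (\<sigma>1 x)"
  and tau_eq [simp]: "\<tau> x = \<sigma>2 (\<sigma>1 x)"
  using sign_aut_comp[of "- \<alpha>" \<beta> "- \<alpha>" \<beta> x] sign_aut_comp[of \<alpha> "- \<beta>" \<alpha> "- \<beta>" x]
    sign_aut_comp[of "- \<alpha>" \<beta> \<alpha> "- \<beta>" x] sign_aut_comp[of \<alpha> "- \<beta>" "- \<alpha>" \<beta> x]
  by (simp_all add: sign_aut_id)

lemma auts_eq: "auts E F = {id, \<sigma>1, \<sigma>2, \<tau>}"
proof
  show "auts E F \<subseteq> {id, \<sigma>1, \<sigma>2, \<tau>}"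
  proof
    fix \<sigma> assume \<sigma>: "\<sigma> \<in> auts E F"
    obtain s t where "s \<in> {\<alpha>, - \<alpha>}" "t \<in> {\<beta>, - \<beta>}" "\<sigma> = sign_aut s t"
      using auts_signs[OF \<sigma>] sign_aut_of[OF \<sigma>] by metis
    then show "\<sigma> \<in> {id, \<sigma>1, \<sigma>2, \<tau>}" by (auto simp: sign_aut_id)
  qed
qed (auto simp: id_in_auts)

lemma fixed_in_F:
  assumes "x \<in> E" "\<sigma>1 x = x" "\<sigma>2 x = x" shows "x \<in> F"
proof -
  have "\<forall>\<sigma>\<in>auts E F. \<sigma> x = x" using assms(2,3) by (simp add: auts_eq)
  then show ?thesis using galois assms(1) unfolding galois_V4_def fixed_field_def by blast
qed

lemma sigma2_E1 [simp]: "x \<in> E1 \<Longrightarrow> \<sigma>2 x = x"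
  by (rule gen_field_auts_agree[OF _ sign_aut_auts id_in_auts, simplified])
    (use subset_E in auto)

lemma sigma1_E2 [simp]: "x \<in> E2 \<Longrightarrow> \<sigma>1 x = x"
  by (rule gen_field_auts_agree[OF _ sign_aut_auts id_in_auts, simplified])
    (use subset_E in auto)

lemma tau_E3: "x \<in> E3 \<Longrightarrow> \<tau> x = x"
  by (rule gen_field_auts_agree[OF _ sign_aut_auts id_in_auts, simplified])
    (use subset_E in \<open>auto simp del: tau_eq\<close>)

lemma sigma1_in_E1 [simp]: "x \<in> E1 \<Longrightarrow> \<sigma>1 x \<in> E1"
  by (rule gen_field_auts_image[OF _ sign_aut_auts]) (use subset_E in auto)

lemma sigma2_in_E2 [simp]: "x \<in> E2 \<Longrightarrow> \<sigma>2 x \<in> E2"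
  by (rule gen_field_auts_image[OF _ sign_aut_auts]) (use subset_E in auto)

lemma E_eq_gen_field_E3: "E = gen_field E3 {\<alpha>}"
proof
  have "\<beta> = \<alpha> * \<beta> / \<alpha>" using alpha_nonzero by simp
  also have "\<dots> \<in> gen_field E3 {\<alpha>}"
    using gen_field_superset[of E3 "{\<alpha>}"] gen_field_superset[of F "{\<alpha> * \<beta>}"]
    by (intro subfield_divide is_subfield_gen_field) auto
  finally show "E \<subseteq> gen_field E3 {\<alpha>}"
    using gen_field_superset[of E3 "{\<alpha>}"] subset_E
    by (intro gen_field_least is_subfield_gen_field) auto
  show "gen_field E3 {\<alpha>} \<subseteq> E"
    using subset_E by (intro gen_field_least) auto
qed

lemma quad_norm_E: "quad_norm E E3 x = x * \<tau> x"
proof (rule quad_norm_eq[OF E_eq_gen_field_E3 two_nonzero alpha_nonzero])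
  show "\<alpha>\<^sup>2 \<in> E3" using alpha_square by simp
  show "\<tau> \<in> auts E E3" using tau_E3 by (intro auts_change_base[OF sign_aut_auts]) auto
qed simp

lemma quad_norm_E1: "x \<in> E1 \<Longrightarrow> quad_norm E1 F x = x * \<sigma>1 x"
proof -
  have "(\<lambda>x. if x \<in> E1 then \<sigma>1 x else x) \<in> auts E1 F"
    using subset_E by (intro auts_restrict) auto
  from quad_norm_eq[OF refl two_nonzero alpha_nonzero alpha_square this]
  show "x \<in> E1 \<Longrightarrow> quad_norm E1 F x = x * \<sigma>1 x" by simp
qed

lemma quad_norm_E2: "x \<in> E2 \<Longrightarrow> quad_norm E2 F x = x * \<sigma>2 x"
proof -
  have "(\<lambda>x. if x \<in> E2 then \<sigma>2 x else x) \<in> auts E2 F"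
    using subset_E by (intro auts_restrict) auto
  from quad_norm_eq[OF refl two_nonzero beta_nonzero beta_square this]
  show "x \<in> E2 \<Longrightarrow> quad_norm E2 F x = x * \<sigma>2 x" by simp
qed

lemma norm_E1_in_F: "x \<in> E1 \<Longrightarrow> x * \<sigma>1 x \<in> F"
  and norm_E2_in_F: "x \<in> E2 \<Longrightarrow> x * \<sigma>2 x \<in> F"
  by (auto intro!: fixed_in_F simp: mult.commute)

lemma fixed_sigma1_in_E2:
  assumes "x \<in> E" "\<sigma>1 x = x" shows "x \<in> E2"
proof -
  define y z where "y = x + \<sigma>2 x" and "z = (x - \<sigma>2 x) * \<beta>"
  have "y \<in> F" unfolding y_def using assms by (intro fixed_in_F) (simp_all add: add.commute)
  moreover have "z \<in> F" unfolding z_def using assms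
    by (intro fixed_in_F) (simp_all add: algebra_simps)
  ultimately have "(y + z / \<beta>\<^sup>2 * \<beta>) / 2 \<in> E2" using beta_square by simp
  moreover have "(y + z / \<beta>\<^sup>2 * \<beta>) / 2 = x"
    using beta_nonzero two_nonzero by (simp add: y_def z_def field_simps power2_eq_square)
  ultimately show ?thesis by metis
qed

lemma E_decomposition:
  assumes "u \<in> E" obtains p q where "p \<in> E2" "q \<in> E2" "u = p + q * \<alpha>"
proof
  define p q where "p = (u + \<sigma>1 u) / 2" and "q = (u - \<sigma>1 u) * \<alpha> / \<alpha>\<^sup>2 / 2"
  have "u + \<sigma>1 u \<in> E2" "(u - \<sigma>1 u) * \<alpha> \<in> E2"
    using assms by (auto intro!: fixed_sigma1_in_E2 simp: algebra_simps)
  then show "p \<in> E2" "q \<in> E2" unfolding p_def q_def using alpha_square by simp_all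
  have "q * \<alpha> = (u - \<sigma>1 u) / 2"
    using alpha_nonzero by (simp add: q_def power2_eq_square)
  then have "p + q * \<alpha> = ((u + \<sigma>1 u) + (u - \<sigma>1 u)) / 2"
    by (simp only: p_def add_divide_distrib)
  also have "\<dots> = u" using two_nonzero by (simp flip: mult_2)
  finally show "u = p + q * \<alpha>" ..
qed

lemma norm_E_in_F_decompose:
  assumes "p \<in> E2" "q \<in> E2" "(p + q * \<alpha>) * \<tau> (p + q * \<alpha>) \<in> F"
  shows "q * \<sigma>2 p = p * \<sigma>2 q"
    and "(p + q * \<alpha>) * \<tau> (p + q * \<alpha>) = p * \<sigma>2 p - \<alpha>\<^sup>2 * (q * \<sigma>2 q)"
proof -
  have \<tau>: "\<tau> (p + q * \<alpha>) = \<sigma>2 p - \<sigma>2 q * \<alpha>" using assms(1,2) by simp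
  have "\<sigma>1 ((p + q * \<alpha>) * (\<sigma>2 p - \<sigma>2 q * \<alpha>)) = (p + q * \<alpha>) * (\<sigma>2 p - \<sigma>2 q * \<alpha>)"
    using assms(3) unfolding \<tau> by (intro auts_fixes[of _ E F]) simp_all
  then have "(p - q * \<alpha>) * (\<sigma>2 p + \<sigma>2 q * \<alpha>) = (p + q * \<alpha>) * (\<sigma>2 p - \<sigma>2 q * \<alpha>)"
    using assms(1,2) by simp
  then have "2 * \<alpha> * (p * \<sigma>2 q - q * \<sigma>2 p) = 0" by algebra
  then show cross: "q * \<sigma>2 p = p * \<sigma>2 q" using two_nonzero alpha_nonzero by simp
  show "(p + q * \<alpha>) * \<tau> (p + q * \<alpha>) = p * \<sigma>2 p - \<alpha>\<^sup>2 * (q * \<sigma>2 q)"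
    unfolding \<tau> using cross by algebra
qed

lemma norm_E_in_norm_product:
  assumes u: "u \<in> E" "u \<noteq> 0" and c: "quad_norm E E3 u \<in> F"
  shows "quad_norm E E3 u \<in> setmul (quad_norm E1 F ` (E1 - {0})) (quad_norm E2 F ` (E2 - {0}))"
proof -
  obtain p q where pq: "p \<in> E2" "q \<in> E2" and u_eq: "u = p + q * \<alpha>"
    using E_decomposition u(1) by blast
  let ?c = "quad_norm E E3 u"
  have "?c \<noteq> 0" using u by (simp add: quad_norm_E)
  from c have "(p + q * \<alpha>) * \<tau> (p + q * \<alpha>) \<in> F" by (simp only: quad_norm_E u_eq)
  note cross = norm_E_in_F_decompose(1)[OF pq this] and c_eq = norm_E_in_F_decompose(2)[OF pq this]
  show ?thesis
  proof (cases "p = 0")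
    case True
    with u_eq u(2) have "q \<noteq> 0" by simp
    have "?c = quad_norm E1 F \<alpha> * quad_norm E2 F q"
      using c_eq True pq by (simp add: quad_norm_E quad_norm_E1 quad_norm_E2 u_eq power2_eq_square)
    then show ?thesis using \<open>q \<noteq> 0\<close> pq alpha_nonzero by (simp add: setmul_imageI)
  next
    case False
    define s r where "s = p * \<sigma>2 p" and "r = q * \<sigma>2 p"
    have "s \<in> F" unfolding s_def using pq(1) by (rule norm_E2_in_F)
    moreover have "r \<in> F" unfolding r_def using pq cross
      by (intro fixed_in_F) (simp_all add: mult.commute)
    ultimately have v1: "s + r * \<alpha> \<in> E1" by simp
    have "s \<noteq> 0" using False pq by (simp add: s_def)
    have "?c * s = (s + r * \<alpha>) * \<sigma>1 (s + r * \<alpha>)"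
      using \<open>s \<in> F\<close> \<open>r \<in> F\<close> c_eq cross
      by (simp add: quad_norm_E u_eq s_def r_def) algebra
    then have c_eq': "?c = quad_norm E1 F (s + r * \<alpha>) * quad_norm E2 F (inverse p)"
      using v1 pq \<open>s \<noteq> 0\<close> by (simp add: quad_norm_E1 quad_norm_E2 s_def field_simps)
    moreover have "s + r * \<alpha> \<noteq> 0" using c_eq' \<open>?c \<noteq> 0\<close> by (auto simp: quad_norm_E1 v1)
    ultimately show ?thesis using v1 pq False by (simp add: setmul_imageI)
  qed
qed

lemma norm_product_eq_norm_E:
  assumes "v1 \<in> E1" "v2 \<in> E2"
  shows "quad_norm E1 F v1 * quad_norm E2 F v2 = quad_norm E E3 (v1 * v2)"
  using assms by (simp add: quad_norm_E quad_norm_E1 quad_norm_E2 ac_simps)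

theorem norm_E_Int_F:
  "quad_norm E E3 ` (E - {0}) \<inter> (F - {0})
     = setmul (quad_norm E1 F ` (E1 - {0})) (quad_norm E2 F ` (E2 - {0}))"
proof (intro set_eqI iffI)
  fix c assume "c \<in> quad_norm E E3 ` (E - {0}) \<inter> (F - {0})"
  then show "c \<in> setmul (quad_norm E1 F ` (E1 - {0})) (quad_norm E2 F ` (E2 - {0}))"
    using norm_E_in_norm_product by blast
next
  fix c assume "c \<in> setmul (quad_norm E1 F ` (E1 - {0})) (quad_norm E2 F ` (E2 - {0}))"
  then obtain v1 v2 where v: "v1 \<in> E1" "v1 \<noteq> 0" "v2 \<in> E2" "v2 \<noteq> 0"
    and c: "c = quad_norm E1 F v1 * quad_norm E2 F v2"
    unfolding setmul_iff by blast
  have "c \<in> F - {0}"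
    using v norm_E1_in_F norm_E2_in_F by (simp add: c quad_norm_E1 quad_norm_E2)
  moreover have "c \<in> quad_norm E E3 ` (E - {0})"
    using v by (simp add: c norm_product_eq_norm_E)
  ultimately show "c \<in> quad_norm E E3 ` (E - {0}) \<inter> (F - {0})" by blast
qed

end

theorem mainTheorem6:
  fixes F :: "'a::field set" and a1 a2 \<alpha> \<beta> :: 'a
  assumes "is_subfield F"
    and "(2::'a) \<noteq> 0"
    and "a1 \<in> F" "a1 \<noteq> 0" "a2 \<in> F" "a2 \<noteq> 0"
    and "\<alpha>\<^sup>2 = a1" "\<beta>\<^sup>2 = a2"
    and "galois_V4 (gen_field F {\<alpha>, \<beta>}) F"
  shows "quad_norm (gen_field F {\<alpha>, \<beta>}) (gen_field F {\<alpha> * \<beta>})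
             ` (gen_field F {\<alpha>, \<beta>} - {0}) \<inter> (F - {0})
         = setmul (quad_norm (gen_field F {\<alpha>}) F ` (gen_field F {\<alpha>} - {0}))
                  (quad_norm (gen_field F {\<beta>}) F ` (gen_field F {\<beta>} - {0}))"
proof -
  interpret biquadratic F \<alpha> \<beta>
    using assms by unfold_locales auto
  show ?thesis by (rule norm_E_Int_F)
qed

end
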